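(* Let $\ell,m,n$ be positive integers with $\ell<n$, $m<n$, $\gcd(m,n)=1$, and let $\mathcal{X},\mathcal{Y},\hat{\mathcal{X}},\hat{\mathcal{Y}},\check{\mathcal{X}},\check{\mathcal{Y}}$ be the words defined in the context from $\mathcal{S}=\mathcal{F}[\ell,m,n]$. Then, as words of length $n$, $$\mathcal{F}[\ell,m,n]=\mathcal{X}\mathcal{Y}=\hat{\mathcal{X}}\hat{\mathcal{Y}},\qquad \mathcal{F}[\ell,m,n]^{(\ell d)}=\mathcal{Y}\mathcal{X}=\check{\mathcal{X}}\check{\mathcal{Y}},$$ $$\mathcal{F}[\ell,m,n]^{(-d)}=\mathcal{X}^{\overline0}\mathcal{Y}^{\overline0}=\hat{\mathcal{Y}}\hat{\mathcal{X}},\qquad \mathcal{F}[\ell,m,n]^{((\ell-1)d)}=\mathcal{Y}^{\overline0}\mathcal{X}^{\overline0}=\check{\mathcal{Y}}\check{\mathcal{X}}.$$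
   Context: For positive integers $\ell<n$, $m<n$, $\gcd(m,n)=1$, $\mathcal{F}[\ell,m,n]_i=L$ if $im\bmod n<\ell$ and $R$ otherwise; it has period $n$ and is identified with the word $\mathcal{F}_0\cdots\mathcal{F}_{n-1}$. $d\in\{1,\dots,n-1\}$ is the inverse of $m$ mod $n$. For a sequence $\mathcal{S}$ of period $n$, $\mathcal{S}^{(j)}_i=\mathcal{S}_{i+j}$ (left shift, identified with the word $\mathcal{S}^{(j)}_0\cdots\mathcal{S}^{(j)}_{n-1}$). Words are finite strings over $\{L,R\}$, indexed from $0$; juxtaposition is concatenation; for a word $\mathcal{W}$, $\mathcal{W}^{\overline0}$ is $\mathcal{W}$ with its symbol of index $0$ changed. With $\mathcal{S}=\mathcal{F}[\ell,m,n]$ and all indices of $\mathcal{S}$ taken mod $n$, for an integer $p$ and $q\ge1$ write $\mathcal{S}[p;q]=\mathcal{S}_p\mathcal{S}_{p+1}\cdots\mathcal{S}_{p+q-1}$. Then $\mathcal{X}=\mathcal{S}[0;\ell d\bmod n]$ (the symbols $\mathcal{S}_0\cdots\mathcal{S}_{(\ell d-1)\bmod n}$), $\mathcal{Y}=\mathcal{S}_{\ell d\bmod n}\cdots\mathcal{S}_{n-1}$, $\hat{\mathcal{X}}=\mathcal{S}_0\cdots\mathcal{S}_{n-d-1}$, $\hat{\mathcal{Y}}=\mathcal{S}_{n-d}\cdots\mathcal{S}_{n-1}$, $\check{\mathcal{X}}=\mathcal{S}[\ell d;\,n-d]$ (cyclically from $\mathcal{S}_{\ell d\bmod n}$ to $\mathcal{S}_{((\ell-1)d-1)\bmod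 n}$), and $\check{\mathcal{Y}}=\mathcal{S}[(\ell-1)d;\,d]$ (cyclically from $\mathcal{S}_{(\ell-1)d\bmod n}$ to $\mathcal{S}_{(\ell d-1)\bmod n}$). *)

theory Defs
  imports Main
begin

datatype LR = L | R

fun flipLR :: "LR \<Rightarrow> LR" where
  "flipLR L = R" | "flipLR R = L"

text \<open>Sequences of period n are modelled as functions on the integers.\<close>

definition Fseq :: "nat \<Rightarrow> nat \<Rightarrow> nat \<Rightarrow> int \<Rightarrow> LR" where
  "Fseq l m n i = (if (i * int m) mod int n < int l then L else R)"

definition shiftseq :: "(int \<Rightarrow> LR) \<Rightarrow> int \<Rightarrow> int \<Rightarrow> LR" where
  "shiftseq S j = (\<lambda>i. S (i + j))"

text \<open>S[p;q] = S_p S_(p+1) ... S_(p+q-1); the word of a period-n sequence is S[0;n].\<close>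
definition seg :: "(int \<Rightarrow> LR) \<Rightarrow> int \<Rightarrow> nat \<Rightarrow> LR list" where
  "seg S p q = map (\<lambda>k. S (p + int k)) [0..<q]"

fun flip0 :: "LR list \<Rightarrow> LR list" where
  "flip0 [] = []" | "flip0 (a # w) = flipLR a # w"

end

theory Submission
  imports Defs
begin

(* Let r = j m mod n. Since m d = 1 (mod n), shifting the index j by -d lowers r by one,
   cyclically, so S_(j-d) differs from S_j exactly when r crosses 0 or l, i.e. when
   j = 0 or j = l d (mod n). Hence the shift by -d flips the first symbols of X and Y and
   nothing else. All other identities are cuts of a cyclic word of length n at the
   positions 0, l d, -d and (l - 1) d, and rotations of such cuts. *)

definition periodic :: "(int \<Rightarrow> 'a) \<Rightarrow> nat \<Rightarrow> bool" where
  "periodic S n \<longleftrightarrow> (\<forall>i. S (i mod int n) = S i)"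

lemma length_seg [simp]: "length (seg S p q) = q"
  by (simp add: seg_def)

lemma seg_append: "seg S p (a + b) = seg S p a @ seg S (p + int a) b"
  by (induct b) (auto simp: seg_def add.assoc)

lemma seg_split:
  assumes "a \<le> q"
  shows "seg S p q = seg S p a @ seg S (p + int a) (q - a)"
  using seg_append[of S p a "q - a"] assms by simp

lemma seg_shiftseq: "seg (shiftseq S j) p q = seg S (p + j) q"
  by (simp add: seg_def shiftseq_def algebra_simps)

lemma seg_cong_mod:
  assumes "periodic S n" "p mod int n = p' mod int n"
  shows "seg S p q = seg S p' q"
proof -
  have "S (p + int k) = S (p' + int k)" for k
    using assms unfolding periodic_def by (metis mod_add_left_eq)
  then show ?thesis by (simp add: seg_def)
qed

lemma seg_rotate:
  assumes "periodic S n" "seg S p n = U @ V" "q mod int n = (p + int (length U)) mod int n"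
  shows "seg S q n = V @ U"
proof -
  define a where "a = length U"
  have "a \<le> n"
    using arg_cong[OF assms(2), of length] by (simp add: a_def)
  then have "seg S p n = seg S p a @ seg S (p + int a) (n - a)"
    by (rule seg_split)
  then have U: "U = seg S p a" and V: "V = seg S (p + int a) (n - a)"
    using assms(2) by (simp_all add: a_def append_eq_append_conv)
  have "seg S q n = seg S (p + int a) n"
    by (intro seg_cong_mod[OF assms(1)]) (simp add: assms(3) a_def)
  also have "\<dots> = V @ seg S (p + int a + int (n - a)) a"
    using seg_split[of "n - a" n S "p + int a"] \<open>a \<le> n\<close> by (simp add: V)
  also have "seg S (p + int a + int (n - a)) a = U"
    unfolding U using \<open>a \<le> n\<close> by (intro seg_cong_mod[OF assms(1)]) (simp add: of_nat_diff)
  finally show ?thesis .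
qed

lemma length_flip0 [simp]: "length (flip0 w) = length w"
  by (cases w) simp_all

lemma seg_flip0:
  assumes "T p = flipLR (S p)" "\<And>k. 0 < k \<Longrightarrow> k < q \<Longrightarrow> T (p + int k) = S (p + int k)"
  shows "seg T p q = flip0 (seg S p q)"
proof (cases q)
  case (Suc q')
  have "[0..<Suc q'] = 0 # map Suc [0..<q']"
    by (simp add: map_Suc_upt upt_conv_Cons)
  moreover have "T (p + int (Suc k)) = S (p + int (Suc k))" if "k < q'" for k
    using assms(2)[of "Suc k"] Suc that by simp
  ultimately show ?thesis
    using assms(1) Suc by (simp add: seg_def)
qed (simp add: seg_def)

lemma seg_flip_at_two_points:
  assumes "0 < e" "e < n"
    and flips: "\<And>k. k < n \<Longrightarrow> T (int k) = (if k = 0 \<or> k = e then flipLR (S (int k)) else S (int k))"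
  shows "seg T 0 n = flip0 (seg S 0 e) @ flip0 (seg S (int e) (n - e))"
proof -
  have "seg T 0 e = flip0 (seg S 0 e)"
    using flips[of 0] flips \<open>e < n\<close> by (intro seg_flip0) auto
  moreover have "seg T (int e) (n - e) = flip0 (seg S (int e) (n - e))"
    using assms flips[of "e + _"] by (intro seg_flip0) (auto simp: add.commute)
  ultimately show ?thesis
    using seg_split[of e n T 0] \<open>e < n\<close> by simp
qed

lemma periodic_Fseq: "periodic (Fseq l m n) n"
  by (simp add: periodic_def Fseq_def mod_mult_left_eq)

lemma mod_mult_inverse_iff:
  fixes a b j r n :: int
  assumes "(a * b) mod n = 1"
  shows "(j * a) mod n = r mod n \<longleftrightarrow> j mod n = (r * b) mod n"
proof
  assume "(j * a) mod n = r mod n"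
  then have "(j * a * b) mod n = (r * b) mod n"
    by (metis mod_mult_left_eq)
  moreover have "(j * a * b) mod n = j mod n"
    using assms by (metis mod_mult_right_eq mult.assoc mult.right_neutral)
  ultimately show "j mod n = (r * b) mod n" by simp
next
  assume "j mod n = (r * b) mod n"
  then have "(j * a) mod n = (r * b * a) mod n"
    by (metis mod_mult_left_eq)
  also have "\<dots> = r mod n"
    using assms by (metis mod_mult_right_eq mult.assoc mult.commute mult.right_neutral)
  finally show "(j * a) mod n = r mod n" .
qed

lemma mult_inverse_mod_neq_zero:
  fixes l m n d :: nat
  assumes "(m * d) mod n = 1" "\<not> n dvd l"
  shows "(l * d) mod n \<noteq> 0"
proof
  assume "(l * d) mod n = 0"
  have "l mod n = (l * (m * d)) mod n"
    using assms(1) by (metis mod_mult_right_eq mult.right_neutral)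
  also have "\<dots> = (l * d * m) mod n"
    by (simp add: ac_simps)
  also have "\<dots> = 0"
    using \<open>(l * d) mod n = 0\<close> by (simp add: mod_eq_0_iff_dvd)
  finally show False
    using assms(2) by (simp add: mod_eq_0_iff_dvd)
qed

lemma Fseq_diff_inverse:
  fixes l m n d :: nat
  assumes "0 < l" "l < n" "(m * d) mod n = 1"
  shows "Fseq l m n (j - int d) =
    (if j mod int n = 0 \<or> j mod int n = int ((l * d) mod n) then flipLR (Fseq l m n j) else Fseq l m n j)"
proof -
  have inv: "(int m * int d) mod int n = 1"
    using assms(3) by (metis of_nat_1 of_nat_mod of_nat_mult)
  define r where "r = (j * int m) mod int n"
  have r: "0 \<le> r" "r < int n"
    using assms by (auto simp: r_def)
  have "((j - int d) * int m) mod int n = (j * int m - int m * int d) mod int n"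
    by (simp add: algebra_simps)
  also have "\<dots> = (r - 1) mod int n"
    using inv by (metis mod_diff_eq r_def)
  finally have shifted: "((j - int d) * int m) mod int n = (r - 1) mod int n" .
  have "j mod int n = 0 \<longleftrightarrow> r = 0"
    using mod_mult_inverse_iff[OF inv, of j 0] by (simp add: r_def)
  moreover have "j mod int n = int ((l * d) mod n) \<longleftrightarrow> r = int l"
    using mod_mult_inverse_iff[OF inv, of j "int l"] assms by (simp add: r_def of_nat_mod)
  moreover have "(r - 1) mod int n = (if r = 0 then int n - 1 else r - 1)"
    using r by (simp add: zmod_minus1)
  ultimately show ?thesis
    using assms r shifted by (auto simp: Fseq_def r_def[symmetric])
qed

lemma seg_Fseq_shift_by_inverse:
  fixes l m n d :: nat
  defines "e \<equiv> (l * d) mod n"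
  assumes "0 < l" "l < n" "(m * d) mod n = 1"
  shows "seg (Fseq l m n) (- int d) n
    = flip0 (seg (Fseq l m n) 0 e) @ flip0 (seg (Fseq l m n) (int e) (n - e))"
proof -
  have "e \<noteq> 0"
    unfolding e_def using assms by (intro mult_inverse_mod_neq_zero) (auto dest: dvd_imp_le)
  moreover have "shiftseq (Fseq l m n) (- int d) (int k)
    = (if k = 0 \<or> k = e then flipLR (Fseq l m n (int k)) else Fseq l m n (int k))" if "k < n" for k
    using Fseq_diff_inverse[OF assms(2-4), of "int k"] that by (simp add: shiftseq_def e_def)
  ultimately show ?thesis
    using seg_flip_at_two_points[of e n "shiftseq (Fseq l m n) (- int d)" "Fseq l m n"] assms(3)
    by (simp add: seg_shiftseq e_def)
qed

theorem proposition3p3: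
  fixes l m n d :: nat
  assumes "0 < l" "0 < m" "l < n" "m < n" "coprime m n"
    and "1 \<le> d" "d \<le> n - 1" "(m * d) mod n = 1"
  shows "let S = Fseq l m n;
             e = (l * d) mod n;
             X = seg S 0 e;
             Y = seg S (int e) (n - e);
             Xh = seg S 0 (n - d);
             Yh = seg S (int n - int d) d;
             Xc = seg S (int l * int d) (n - d);
             Yc = seg S ((int l - 1) * int d) d
         in seg S 0 n = X @ Y \<and> seg S 0 n = Xh @ Yh
          \<and> seg (shiftseq S (int l * int d)) 0 n = Y @ X
          \<and> seg (shiftseq S (int l * int d)) 0 n = Xc @ Yc
          \<and> seg (shiftseq S (- int d)) 0 n = flip0 X @ flip0 Y
          \<and> seg (shiftseq S (- int d)) 0 n = Yh @ Xh
          \<and> seg (shiftseq S ((int l - 1) * int d)) 0 n = flip0 Y @ flip0 X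
          \<and> seg (shiftseq S ((int l - 1) * int d)) 0 n = Yc @ Xc"
proof -
  define S where "S = Fseq l m n"
  define e where "e = (l * d) mod n"
  have per: "periodic S n"
    unfolding S_def by (rule periodic_Fseq)
  have "e < n" "d < n"
    using assms by (auto simp: e_def)
  have ld: "(int l * int d) mod int n = int e"
    by (simp add: e_def of_nat_mod)
  have XY: "seg S 0 n = seg S 0 e @ seg S (int e) (n - e)"
    using seg_split[of e n S 0] \<open>e < n\<close> by simp
  have XhYh: "seg S 0 n = seg S 0 (n - d) @ seg S (int n - int d) d"
    using seg_split[of "n - d" n S 0] \<open>d < n\<close> by (simp add: of_nat_diff)
  have YcXc: "seg S ((int l - 1) * int d) n = seg S ((int l - 1) * int d) d @ seg S (int l * int d) (n - d)"
    using seg_split[of d n S "(int l - 1) * int d"] \<open>d < n\<close> by (simp add: algebra_simps)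
  have XYflip: "seg S (- int d) n = flip0 (seg S 0 e) @ flip0 (seg S (int e) (n - e))"
    unfolding S_def e_def using assms(1,3,8) by (rule seg_Fseq_shift_by_inverse)
  have "seg S (int l * int d) n = seg S (int e) (n - e) @ seg S 0 e"
    using per XY by (rule seg_rotate) (simp add: ld \<open>e < n\<close>)
  moreover have "seg S (int l * int d) n = seg S (int l * int d) (n - d) @ seg S ((int l - 1) * int d) d"
    using per YcXc by (rule seg_rotate) (simp add: algebra_simps)
  moreover have "seg S (- int d) n = seg S (int n - int d) d @ seg S 0 (n - d)"
    using per XhYh by (rule seg_rotate) (use \<open>d < n\<close> in \<open>simp add: of_nat_diff mod_diff_left_eq[of "int n", symmetric]\<close>)
  moreover have "seg S ((int l - 1) * int d) n = flip0 (seg S (int e) (n - e)) @ flip0 (seg S 0 e)"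
    using per XYflip by (rule seg_rotate) (simp add: ld[symmetric] mod_diff_left_eq algebra_simps)
  ultimately show ?thesis
    unfolding Let_def seg_shiftseq add_0_left S_def[symmetric] e_def[symmetric]
    using XY XhYh YcXc XYflip by blast
qed

end
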